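(* Let $K_1,K_2$ be compact spaces, $G$ a compact group with Haar probability measure $\lambda$, $f_i\colon K_i\to G$ continuous surjections and $\mu_i\in P(K_i)$ with $f_i[\mu_i]=\lambda$ ($i=1,2$), and $f=f_1\times f_2\colon K_1\times K_2\to G\times G$. For a finite Borel partition $\mathcal E$ of $G$ and $y\in G$ define, for $D\in Bor(K_1\times K_2)$, $$\mu_{y,\mathcal E}(D)=\sum_{E\in\mathcal E^\ast}\frac{(\mu_1\otimes\mu_2)\big(D\cap(f_1^{-1}[E]\times f_2^{-1}[E\oplus y])\big)}{\lambda(E)}.$$ Then $\mu_{y,\mathcal E}\in P(K_1\times K_2)$, $f[\mu_{y,\mathcal E}]=\nu_{y,\mathcal E}$, and $\mu_{y,\mathcal E}(A\times K_2)=\mu_1(A)$, $\mu_{y,\mathcal E}(K_1\times B)=\mu_2(B)$ for all Borel $A\subseteq K_1$, $B\subseteq K_2$.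
   Context: $G=(G,\oplus)$ is a compact Hausdorff group with Haar probability measure $\lambda$; $E\oplus y=\{e\oplus y:e\in E\}$. $\mathcal E^\ast$ is the set of $E\in\mathcal E$ with $\lambda(E)>0$. $P(X)$ is the set of regular Borel probability measures on the compact space $X$; $g[\mu](A)=\mu(g^{-1}[A])$ is the image measure. $\mu_1\otimes\mu_2$ and $\lambda_2=\lambda\otimes\lambda$ denote the product measures, extended uniquely to regular Borel probability measures. $\nu_{y,\mathcal E}$ is the measure on $G\times G$ given by $\nu_{y,\mathcal E}(D)=\sum_{E\in\mathcal E^\ast}\lambda_2\big(D\cap(E\times(E\oplus y))\big)/\lambda(E)$. *)

theory Defs
  imports "HOL-Probability.Probability"
begin

definition regular_borel_prob :: "'a::topological_space measure \<Rightarrow> bool" where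
  "regular_borel_prob M \<longleftrightarrow>
     prob_space M \<and> sets M = sets borel \<and>
     (\<forall>A\<in>sets M. emeasure M A = (SUP K\<in>{K. K \<subseteq> A \<and> compact K}. emeasure M K))"

text \<open>Product of two regular Borel probability measures, extended (uniquely) to a regular
  Borel probability measure on the Borel sets of the product space: the unique element of
  P(X\<times>Y) that agrees with the product measure on the product sigma-algebra.\<close>
definition reg_prod :: "'a::topological_space measure \<Rightarrow> 'b::topological_space measure
    \<Rightarrow> ('a \<times> 'b) measure" where
  "reg_prod M N = (THE R. regular_borel_prob R \<and>
      (\<forall>D\<in>sets (M \<Otimes>\<^sub>M N). emeasure R D = emeasure (M \<Otimes>\<^sub>M N) D))"

text \<open>Haar probability measure on a compact group (bi-invariant, as Haar measure on a compact
  group is).\<close>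
definition haar_prob :: "'g::topological_group_add measure \<Rightarrow> bool" where
  "haar_prob L \<longleftrightarrow> regular_borel_prob L \<and>
     (\<forall>E\<in>sets borel. \<forall>y. measure L ((\<lambda>e. e + y) ` E) = measure L E
                        \<and> measure L ((\<lambda>e. y + e) ` E) = measure L E)"

definition finite_borel_partition :: "'a::topological_space set set \<Rightarrow> bool" where
  "finite_borel_partition P \<longleftrightarrow> finite P \<and> P \<subseteq> sets borel \<and> \<Union>P = UNIV \<and>
     (\<forall>E\<in>P. \<forall>F\<in>P. E \<noteq> F \<longrightarrow> E \<inter> F = {})"

definition image_measure_eq :: "('a \<Rightarrow> 'b::topological_space) \<Rightarrow> 'a measure \<Rightarrow> ('b set \<Rightarrow> real) \<Rightarrow> bool" where
  "image_measure_eq g M \<nu> \<longleftrightarrow> (\<forall>D\<in>sets borel. measure M (g -` D) = \<nu> D)"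

definition pos_part :: "'g measure \<Rightarrow> 'g set set \<Rightarrow> 'g set set" where
  "pos_part L P = {E\<in>P. measure L E > 0}"

definition nu_yE :: "'g::topological_group_add measure \<Rightarrow> 'g \<Rightarrow> 'g set set \<Rightarrow> ('g \<times> 'g) set \<Rightarrow> real" where
  "nu_yE L y P D = (\<Sum>E\<in>pos_part L P.
      measure (reg_prod L L) (D \<inter> (E \<times> ((\<lambda>e. e + y) ` E))) / measure L E)"

definition mu_yE :: "'g::topological_group_add measure \<Rightarrow> 'a::topological_space measure \<Rightarrow>
    'b::topological_space measure \<Rightarrow> ('a \<Rightarrow> 'g) \<Rightarrow> ('b \<Rightarrow> 'g) \<Rightarrow> 'g \<Rightarrow> 'g set set \<Rightarrow>
    ('a \<times> 'b) set \<Rightarrow> real" where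
  "mu_yE L M1 M2 f1 f2 y P D = (\<Sum>E\<in>pos_part L P.
      measure (reg_prod M1 M2) (D \<inter> (f1 -` E \<times> f2 -` ((\<lambda>e. e + y) ` E))) / measure L E)"

end

theory Submission
  imports Defs
begin

(*
  The measure \<mu>\<^bsub>y,\<E>\<^esub> has density \<Sum>\<^sub>E 1\<^bsub>cell E\<^esub> / \<lambda>(E) with respect to the regular product
  \<mu>\<^sub>1 \<otimes> \<mu>\<^sub>2, where cell E = f\<^sub>1\<^sup>-\<^sup>1[E] \<times> f\<^sub>2\<^sup>-\<^sup>1[E \<oplus> y].  By translation invariance a
  rectangle A \<times> f\<^sub>2\<^sup>-\<^sup>1[E \<oplus> y] has product measure \<mu>\<^sub>1(A) \<lambda>(E), so summing over the partition
  gives the marginals; the density is bounded, so regularity is inherited; and f maps \<mu>\<^sub>1 \<otimes> \<mu>\<^sub>2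
  to \<lambda> \<otimes> \<lambda> because both are regular and agree on rectangles, which gives the image \<nu>\<^bsub>y,\<E>\<^esub>.

  The Borel \<sigma>-algebra of K\<^sub>1 \<times> K\<^sub>2 may exceed
  the product \<sigma>-algebra, so the product is defined as D \<mapsto> \<integral> \<nu>(D\<^sub>x) d\<mu>(x) on all Borel sets.
  It is inner regular on open sets by a layer-cake argument with finitely many rectangles, hence
  regular, and a regular measure is determined by its values on rectangles.
*)

section \<open>Regular Borel probability measures\<close>

lemma regular_borel_probD:
  assumes "regular_borel_prob M"
  shows "prob_space M" "sets M = sets borel" "space M = UNIV"
  using assms unfolding regular_borel_prob_def
  by (auto dest: sets_eq_imp_space_eq)

lemma compact_if_closed_in_compact_UNIV:
  assumes "compact (UNIV :: 'c::topological_space set)" "closed (S :: 'c set)"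
  shows "compact S"
  using compact_Int_closed[OF assms] by simp

lemma regular_borel_prob_inner:
  fixes M :: "'c::t2_space measure"
  assumes R: "regular_borel_prob M" and A: "A \<in> sets borel" and e: "e > 0"
  shows "\<exists>K. compact K \<and> K \<subseteq> A \<and> measure M A < measure M K + e"
proof (rule ccontr)
  assume neg: "\<not> ?thesis"
  interpret prob_space M using regular_borel_probD[OF R] by simp
  have eqS: "emeasure M A = (SUP K\<in>{K. K \<subseteq> A \<and> compact K}. emeasure M K)"
    using R A unfolding regular_borel_prob_def by auto
  show False
  proof (cases "measure M A < e")
    case True
    then show ?thesis using neg by (metis compact_empty empty_subsetI add_0 measure_empty)
  next
    case False
    have "(SUP K\<in>{K. K \<subseteq> A \<and> compact K}. emeasure M K) \<le> ennreal (measure M A - e)"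
    proof (rule SUP_least)
      fix K assume K: "K \<in> {K. K \<subseteq> A \<and> compact K}"
      then have "\<not> measure M A < measure M K + e" using neg by blast
      then have "measure M K \<le> measure M A - e" by linarith
      then show "emeasure M K \<le> ennreal (measure M A - e)"
        by (simp add: emeasure_eq_measure ennreal_leI)
    qed
    then have "ennreal (measure M A) \<le> ennreal (measure M A - e)"
      using eqS by (simp add: emeasure_eq_measure)
    moreover have "0 \<le> measure M A - e" using False by linarith
    ultimately have "measure M A \<le> measure M A - e"
      using ennreal_le_iff by blast
    then show False using e by simp
  qed
qed

lemma regular_borel_prob_measure_compl:
  assumes "regular_borel_prob M" "A \<in> sets borel"
  shows "measure M (- A) = 1 - measure M A"
  using prob_space.prob_compl[of M A] regular_borel_probD[OF assms(1)] assms(2)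
  by (simp add: Compl_eq_Diff_UNIV)

lemma regular_borel_prob_outer:
  fixes M :: "'c::t2_space measure"
  assumes R: "regular_borel_prob M" and A: "A \<in> sets borel" and e: "e > 0"
  shows "\<exists>U. open U \<and> A \<subseteq> U \<and> measure M U < measure M A + e"
proof -
  obtain K where K: "compact K" "K \<subseteq> - A" "measure M (- A) < measure M K + e"
    using regular_borel_prob_inner[OF R _ e, of "- A"] A by auto
  have "open (- K)" using K(1) by (simp add: compact_imp_closed open_Compl)
  moreover have "measure M (- K) = 1 - measure M K" "measure M (- A) = 1 - measure M A"
    using regular_borel_prob_measure_compl[OF R] borel_compact[OF K(1)] A by auto
  ultimately show ?thesis using K(2,3) by (intro exI[of _ "- K"] conjI) auto
qed

lemma regular_borel_probI_inner:
  fixes M :: "'c::t2_space measure"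
  assumes P: "prob_space M" and S: "sets M = sets borel"
    and I: "\<And>A e. A \<in> sets borel \<Longrightarrow> e > 0 \<Longrightarrow>
              \<exists>K. compact K \<and> K \<subseteq> A \<and> measure M A < measure M K + e"
  shows "regular_borel_prob M"
  unfolding regular_borel_prob_def
proof (intro conjI ballI P S antisym)
  interpret prob_space M using P .
  fix A assume A: "A \<in> sets M"
  show "(SUP K\<in>{K. K \<subseteq> A \<and> compact K}. emeasure M K) \<le> emeasure M A"
    by (rule SUP_least) (use A S borel_compact in \<open>auto intro!: emeasure_mono\<close>)
  show "emeasure M A \<le> (SUP K\<in>{K. K \<subseteq> A \<and> compact K}. emeasure M K)"
  proof (rule ennreal_le_epsilon)
    fix e :: real assume e: "0 < e"
    obtain K where K: "compact K" "K \<subseteq> A" "measure M A < measure M K + e"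
      using I[of A e] A S e by auto
    have "emeasure M A \<le> ennreal (measure M K + e)"
      using K(3) by (simp add: emeasure_eq_measure ennreal_leI)
    also have "\<dots> = ennreal (measure M K) + ennreal e"
      using e by (intro ennreal_plus) auto
    also have "ennreal (measure M K) \<le> (SUP K\<in>{K. K \<subseteq> A \<and> compact K}. emeasure M K)"
      using K by (intro SUP_upper2[of K]) (auto simp: emeasure_eq_measure)
    finally show "emeasure M A \<le> (SUP K\<in>{K. K \<subseteq> A \<and> compact K}. emeasure M K) + ennreal e"
      by (simp add: add_right_mono)
  qed
qed

lemma regular_borel_prob_dominated:
  fixes Q R :: "'c::t2_space measure"
  assumes Q: "regular_borel_prob Q" and P: "prob_space R" and S: "sets R = sets borel"
    and c: "c \<ge> 0" and dom: "\<And>A. A \<in> sets borel \<Longrightarrow> measure R A \<le> c * measure Q A"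
  shows "regular_borel_prob R"
proof (rule regular_borel_probI_inner[OF P S])
  interpret R: prob_space R using P .
  interpret Q: prob_space Q using regular_borel_probD[OF Q] by simp
  have sQ: "sets Q = sets borel" using regular_borel_probD[OF Q] by simp
  fix A :: "'c set" and e :: real assume A: "A \<in> sets borel" and e: "e > 0"
  obtain K where K: "compact K" "K \<subseteq> A" "measure Q A < measure Q K + e / (c + 1)"
    using regular_borel_prob_inner[OF Q A, of "e / (c + 1)"] e c by auto
  have Kb: "K \<in> sets borel" using borel_compact[OF K(1)] .
  have "measure R A = measure R K + measure R (A - K)"
    using R.finite_measure_Diff[of A K] A Kb K(2) S by auto
  also have "measure R (A - K) \<le> c * measure Q (A - K)" using dom A Kb by auto
  also have "measure Q (A - K) = measure Q A - measure Q K"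
    using Q.finite_measure_Diff[of A K] A Kb K(2) sQ by auto
  also have "c * (measure Q A - measure Q K) \<le> c * (e / (c + 1))"
    using K(3) c by (intro mult_left_mono) auto
  also have "c * (e / (c + 1)) < e" using c e by (simp add: field_simps)
  finally show "\<exists>K. compact K \<and> K \<subseteq> A \<and> measure R A < measure R K + e"
    using K by auto
qed

lemma regular_borel_prob_distr:
  fixes Q :: "'c::t2_space measure" and f :: "'c \<Rightarrow> 'd::t2_space"
  assumes Q: "regular_borel_prob Q" and f: "continuous_on UNIV f"
  shows "regular_borel_prob (distr Q borel f)"
proof -
  interpret Q: prob_space Q using regular_borel_probD[OF Q] by simp
  have sQ: "sets Q = sets borel" and sp: "space Q = UNIV" using regular_borel_probD[OF Q] by auto
  have fm: "f \<in> measurable Q borel"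
    using borel_measurable_continuous_onI[OF f] measurable_cong_sets[OF sQ refl] by blast
  show ?thesis
  proof (rule regular_borel_probI_inner)
    show "prob_space (distr Q borel f)" using Q.prob_space_distr[OF fm] .
    show "sets (distr Q borel f) = sets borel" by simp
    fix A :: "'d set" and e :: real assume A: "A \<in> sets borel" and e: "e > 0"
    have fA: "f -` A \<in> sets borel" using fm A sQ sp by (metis measurable_sets Int_UNIV_right)
    obtain K where K: "compact K" "K \<subseteq> f -` A" "measure Q (f -` A) < measure Q K + e"
      using regular_borel_prob_inner[OF Q fA e] by blast
    have cK: "compact (f ` K)"
      using K(1) f by (metis compact_continuous_image continuous_on_subset subset_UNIV)
    have "measure Q K \<le> measure Q (f -` (f ` K))"
      using borel_compact[OF cK] fm sQ sp
      by (intro Q.finite_measure_mono) (auto, metis Int_UNIV_right measurable_sets)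
    moreover have "measure (distr Q borel f) (f ` K) = measure Q (f -` (f ` K))"
      using borel_compact[OF cK] fm sp by (simp add: measure_distr)
    moreover have "measure (distr Q borel f) A = measure Q (f -` A)"
      using A fm sp by (simp add: measure_distr)
    ultimately show "\<exists>K. compact K \<and> K \<subseteq> A \<and>
        measure (distr Q borel f) A < measure (distr Q borel f) K + e"
      using K cK by (intro exI[of _ "f ` K"]) auto
  qed
qed

lemma regular_borel_prob_eqI_open:
  fixes R1 R2 :: "'c::t2_space measure"
  assumes R1: "regular_borel_prob R1" and R2: "regular_borel_prob R2"
    and eq: "\<And>W. open W \<Longrightarrow> measure R1 W = measure R2 W"
  shows "R1 = R2"
proof (rule measure_eqI)
  interpret P1: prob_space R1 using regular_borel_probD[OF R1] by simp
  interpret P2: prob_space R2 using regular_borel_probD[OF R2] by simp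
  have s1: "sets R1 = sets borel" and s2: "sets R2 = sets borel"
    using regular_borel_probD[OF R1] regular_borel_probD[OF R2] by auto
  then show "sets R1 = sets R2" by simp
  have compact_eq: "emeasure R1 K = emeasure R2 K" if K: "compact K" for K
  proof -
    have "open (- K)" using K by (simp add: compact_imp_closed open_Compl)
    then have "measure R1 (- K) = measure R2 (- K)" by (rule eq)
    then have "measure R1 K = measure R2 K"
      using regular_borel_prob_measure_compl[OF _ borel_compact[OF K]] R1 R2 by simp
    then show ?thesis by (simp add: P1.emeasure_eq_measure P2.emeasure_eq_measure)
  qed
  fix A assume A: "A \<in> sets R1"
  have "emeasure R1 A = (SUP K\<in>{K. K \<subseteq> A \<and> compact K}. emeasure R1 K)"
    using R1 A s1 unfolding regular_borel_prob_def by auto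
  also have "\<dots> = (SUP K\<in>{K. K \<subseteq> A \<and> compact K}. emeasure R2 K)"
    using compact_eq by (auto intro: SUP_cong)
  also have "\<dots> = emeasure R2 A"
    using R2 A s1 s2 unfolding regular_borel_prob_def by auto
  finally show "emeasure R1 A = emeasure R2 A" .
qed

section \<open>Inner approximation by compact sets\<close>

definition compact_approx :: "'c::topological_space measure \<Rightarrow> 'c set \<Rightarrow> bool" where
  "compact_approx R D \<longleftrightarrow> (\<forall>e>0. \<exists>K. compact K \<and> K \<subseteq> D \<and> measure R D < measure R K + e)"

lemma compact_approx_compact: "compact D \<Longrightarrow> compact_approx R D"
  unfolding compact_approx_def by (intro allI impI exI[of _ D]) auto

lemma compact_approxE:
  assumes "compact_approx R D" "e > 0"
  obtains K where "compact K" "K \<subseteq> D" "measure R D < measure R K + e"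
  using assms unfolding compact_approx_def by blast

lemma compact_approx_Un:
  fixes R :: "'c::t2_space measure"
  assumes F: "finite_measure R" and S: "sets R = sets borel"
    and D1: "D1 \<in> sets borel" and D2: "D2 \<in> sets borel"
    and a1: "compact_approx R D1" and a2: "compact_approx R D2"
  shows "compact_approx R (D1 \<union> D2)"
  unfolding compact_approx_def
proof (intro allI impI)
  interpret finite_measure R by (rule F)
  fix e :: real assume e: "e > 0"
  obtain K1 where K1: "compact K1" "K1 \<subseteq> D1" "measure R D1 < measure R K1 + e/2"
    by (rule compact_approxE[OF a1, of "e/2"]) (use e in auto)
  obtain K2 where K2: "compact K2" "K2 \<subseteq> D2" "measure R D2 < measure R K2 + e/2"
    by (rule compact_approxE[OF a2, of "e/2"]) (use e in auto)
  have b: "K1 \<in> sets R" "K2 \<in> sets R" "D1 \<in> sets R" "D2 \<in> sets R"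
    using borel_compact K1 K2 D1 D2 S by auto
  have "measure R (D1 \<union> D2) \<le> measure R ((K1 \<union> K2) \<union> ((D1 - K1) \<union> (D2 - K2)))"
    using b by (intro finite_measure_mono) auto
  also have "\<dots> \<le> measure R (K1 \<union> K2) + measure R ((D1 - K1) \<union> (D2 - K2))"
    using b by (intro measure_subadditive) auto
  also have "measure R ((D1 - K1) \<union> (D2 - K2)) \<le> measure R (D1 - K1) + measure R (D2 - K2)"
    using b by (intro measure_subadditive) auto
  also have "measure R (D1 - K1) = measure R D1 - measure R K1"
    using b K1 by (intro finite_measure_Diff) auto
  also have "measure R (D2 - K2) = measure R D2 - measure R K2"
    using b K2 by (intro finite_measure_Diff) auto
  finally have "measure R (D1 \<union> D2) < measure R (K1 \<union> K2) + e"
    using K1(3) K2(3) by linarith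
  then show "\<exists>K. compact K \<and> K \<subseteq> D1 \<union> D2 \<and> measure R (D1 \<union> D2) < measure R K + e"
    using K1 K2 by (intro exI[of _ "K1 \<union> K2"]) auto
qed

lemma compact_approx_finite_Union:
  fixes R :: "'c::t2_space measure"
  assumes F: "finite_measure R" and S: "sets R = sets borel"
  shows "finite T \<Longrightarrow> T \<subseteq> sets borel \<Longrightarrow> (\<And>D. D \<in> T \<Longrightarrow> compact_approx R D) \<Longrightarrow>
    compact_approx R (\<Union>T)"
proof (induction T rule: finite_induct)
  case empty
  then show ?case using compact_approx_compact[of "{}"] by simp
next
  case (insert D T)
  then show ?case
    using compact_approx_Un[OF F S, of D "\<Union>T"] sets.finite_Union[of T borel] by auto
qed

lemma compact_approx_countable_Union:
  fixes R :: "'c::t2_space measure" and A :: "nat \<Rightarrow> 'c set"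
  assumes F: "finite_measure R" and S: "sets R = sets borel"
    and A: "\<And>i. A i \<in> sets borel" "\<And>i. compact_approx R (A i)"
  shows "compact_approx R (\<Union>i. A i)"
  unfolding compact_approx_def
proof (intro allI impI)
  interpret finite_measure R by (rule F)
  fix e :: real assume e: "e > 0"
  define B where "B n = \<Union>(A ` {..<n})" for n
  have "incseq B" unfolding B_def incseq_def by (intro allI impI UN_mono) auto
  moreover have "range B \<subseteq> sets R" unfolding B_def using A(1) S by auto
  moreover have UB: "(\<Union>n. B n) = (\<Union>i. A i)" unfolding B_def by auto
  ultimately have "(\<lambda>n. measure R (B n)) \<longlonglongrightarrow> measure R (\<Union>i. A i)"
    using finite_Lim_measure_incseq by metis
  then obtain N where N: "\<bar>measure R (B N) - measure R (\<Union>i. A i)\<bar> < e/2"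
    using e by (metis LIMSEQ_iff half_gt_zero order_refl real_norm_def)
  have "compact_approx R (B N)"
    unfolding B_def using A by (intro compact_approx_finite_Union[OF F S]) auto
  then obtain K where K: "compact K" "K \<subseteq> B N" "measure R (B N) < measure R K + e/2"
    by (rule compact_approxE[of R "B N" "e/2"]) (use e in auto)
  have "K \<subseteq> (\<Union>i. A i)" using K(2) UB by blast
  moreover have "measure R (\<Union>i. A i) < measure R K + e" using N K(3) by linarith
  ultimately show "\<exists>K. compact K \<and> K \<subseteq> (\<Union>i. A i) \<and> measure R (\<Union>i. A i) < measure R K + e"
    using K(1) by blast
qed

lemma compact_approx_countable_Inter:
  fixes R :: "'c::t2_space measure" and A :: "nat \<Rightarrow> 'c set"
  assumes F: "finite_measure R" and S: "sets R = sets borel"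
    and cU: "compact (UNIV :: 'c set)"
    and A: "\<And>i. A i \<in> sets borel" "\<And>i. compact_approx R (A i)"
  shows "compact_approx R (\<Inter>i. A i)"
  unfolding compact_approx_def
proof (intro allI impI)
  interpret finite_measure R by (rule F)
  fix e :: real assume e: "e > 0"
  define \<epsilon> where "\<epsilon> i = e/2 * (1/2::real)^Suc i" for i
  have "\<forall>i. \<exists>K. compact K \<and> K \<subseteq> A i \<and> measure R (A i) < measure R K + \<epsilon> i"
    using A(2) e unfolding compact_approx_def \<epsilon>_def by simp
  then obtain K where K: "\<And>i. compact (K i)" "\<And>i. K i \<subseteq> A i"
    "\<And>i. measure R (A i) < measure R (K i) + \<epsilon> i"
    by metis
  define K' where "K' = (\<Inter>i. K i)"
  have cK': "compact K'" unfolding K'_def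
    using K(1) by (intro compact_if_closed_in_compact_UNIV[OF cU] closed_INT)
      (auto intro: compact_imp_closed)
  have Kb: "\<And>i. K i \<in> sets R" and Ab: "\<And>i. A i \<in> sets R" using K(1) A(1) borel_compact S by auto
  have le: "measure R (A i - K i) \<le> \<epsilon> i" for i
    using finite_measure_Diff[OF Ab[of i] Kb[of i] K(2)[of i]] K(3)[of i] by linarith
  have "(\<lambda>i. \<epsilon> i) sums (e/2 * 1)"
    unfolding \<epsilon>_def by (intro sums_mult power_half_series)
  then have s\<epsilon>: "summable \<epsilon>" "(\<Sum>i. \<epsilon> i) = e/2" by (auto simp: sums_iff)
  have sm: "summable (\<lambda>i. measure R (A i - K i))"
    by (rule summable_comparison_test'[OF s\<epsilon>(1), of 0]) (use le in auto)
  have Ub: "(\<Union>i. A i - K i) \<in> sets R" and K'b: "K' \<in> sets R"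
    using Kb Ab borel_compact[OF cK'] S by auto
  have "(\<Inter>i. A i) \<subseteq> K' \<union> (\<Union>i. A i - K i)" unfolding K'_def by auto
  then have "measure R (\<Inter>i. A i) \<le> measure R (K' \<union> (\<Union>i. A i - K i))"
    using Ub K'b by (intro finite_measure_mono) auto
  also have "\<dots> \<le> measure R K' + measure R (\<Union>i. A i - K i)"
    using Ub K'b by (intro measure_subadditive) auto
  also have "measure R (\<Union>i. A i - K i) \<le> (\<Sum>i. measure R (A i - K i))"
    using Kb Ab sm by (intro finite_measure_subadditive_countably) auto
  also have "\<dots> \<le> (\<Sum>i. \<epsilon> i)"
    using le sm s\<epsilon> by (intro suminf_le) auto
  finally have "measure R (\<Inter>i. A i) < measure R K' + e" using s\<epsilon> e by linarith
  moreover have "K' \<subseteq> (\<Inter>i. A i)" unfolding K'_def using K(2) by blast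
  ultimately show "\<exists>K. compact K \<and> K \<subseteq> (\<Inter>i. A i) \<and> measure R (\<Inter>i. A i) < measure R K + e"
    using cK' by blast
qed

lemma compact_approx_borel:
  fixes R :: "'c::t2_space measure"
  assumes F: "finite_measure R" and S: "sets R = sets borel"
    and cU: "compact (UNIV :: 'c set)"
    and op: "\<And>W. open W \<Longrightarrow> compact_approx R W"
    and D: "D \<in> sets borel"
  shows "compact_approx R D"
proof -
  have "D \<in> sigma_sets UNIV {S. open S}" using D sets_borel by auto
  then have "compact_approx R D \<and> compact_approx R (- D)"
  proof (induction rule: sigma_sets.induct)
    case (Basic W)
    have "compact (- W)"
      using compact_if_closed_in_compact_UNIV[OF cU] Basic by (simp add: closed_Compl)
    then show ?case using op Basic compact_approx_compact by auto
  next
    case Empty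
    then show ?case using compact_approx_compact cU by auto
  next
    case (Compl A)
    then show ?case by (simp add: Compl_eq_Diff_UNIV[symmetric])
  next
    case (Union A)
    have Ab: "A i \<in> sets borel" for i using Union(1) sets_borel by auto
    have "compact_approx R (\<Union>i. A i)"
      using Ab Union(2) by (intro compact_approx_countable_Union[OF F S]) auto
    moreover have "compact_approx R (\<Inter>i. - A i)"
      using Ab Union(2) by (intro compact_approx_countable_Inter[OF F S cU]) auto
    ultimately show ?case by simp
  qed
  then show ?thesis by simp
qed

lemma regular_borel_probI_open:
  fixes R :: "'c::t2_space measure"
  assumes P: "prob_space R" and S: "sets R = sets borel"
    and cU: "compact (UNIV :: 'c set)"
    and op: "\<And>W. open W \<Longrightarrow> compact_approx R W"
  shows "regular_borel_prob R"
proof (rule regular_borel_probI_inner[OF P S])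
  interpret prob_space R by (rule P)
  fix A :: "'c set" and e :: real assume "A \<in> sets borel" "e > 0"
  then show "\<exists>K. compact K \<and> K \<subseteq> A \<and> measure R A < measure R K + e"
    using compact_approx_borel[OF finite_measure_axioms S cU op] unfolding compact_approx_def
    by blast
qed

section \<open>Regular measures on a product are determined by rectangles\<close>

lemma emeasure_eq_on_sigma_sets:
  fixes M N :: "'c measure"
  assumes FM: "finite_measure M" and FN: "finite_measure N"
    and sM: "space M = UNIV" and sN: "space N = UNIV"
    and IS: "Int_stable E" and U: "UNIV \<in> E"
    and SM: "sigma_sets UNIV E \<subseteq> sets M" and SN: "sigma_sets UNIV E \<subseteq> sets N"
    and eq: "\<And>X. X \<in> E \<Longrightarrow> emeasure M X = emeasure N X"
    and D: "D \<in> sigma_sets UNIV E"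
  shows "emeasure M D = emeasure N D"
proof -
  have "E \<subseteq> Pow UNIV" by auto
  from IS this D show ?thesis
  proof (induction rule: sigma_sets_induct_disjoint)
    case (basic A)
    then show ?case using eq by simp
  next
    case empty
    then show ?case by simp
  next
    case (compl A)
    have AM: "A \<in> sets M" and AN: "A \<in> sets N" using compl SM SN by auto
    have "emeasure M (UNIV - A) = emeasure M UNIV - emeasure M A"
      using emeasure_compl[OF AM] finite_measure.emeasure_finite[OF FM, of A] sM by simp
    also have "\<dots> = emeasure N UNIV - emeasure N A" using compl.IH eq[OF U] by simp
    also have "\<dots> = emeasure N (UNIV - A)"
      using emeasure_compl[OF AN] finite_measure.emeasure_finite[OF FN, of A] sN by simp
    finally show ?case .
  next
    case (union A)
    then show ?case using SM SN by (subst (1 2) suminf_emeasure[symmetric]) auto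
  qed
qed

abbreviation borel_rectangles :: "('c::topological_space \<times> 'd::topological_space) set set" where
  "borel_rectangles \<equiv> {A \<times> B | A B. A \<in> sets borel \<and> B \<in> sets borel}"

lemma sigma_sets_borel_rectangles: "sigma_sets UNIV borel_rectangles \<subseteq> sets borel"
  by (rule borel_sigma_sets_subset) (blast intro: borel_Times)

lemma Int_stable_borel_rectangles: "Int_stable borel_rectangles"
  unfolding Int_stable_def by (auto simp: Times_Int_Times) (metis sets.Int)

lemma UNIV_in_borel_rectangles: "UNIV \<in> borel_rectangles"
  by (rule CollectI, rule exI[of _ UNIV], rule exI[of _ UNIV]) auto

lemma compact_subset_open_finite_rectangles:
  fixes K W :: "('c::topological_space \<times> 'd::topological_space) set"
  assumes K: "compact K" and W: "open W" and KW: "K \<subseteq> W"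
  obtains T where "finite T" "T \<subseteq> {a \<times> b | a b. open a \<and> open b}" "K \<subseteq> \<Union>T" "\<Union>T \<subseteq> W"
proof -
  let ?C = "{a \<times> b | a b. open a \<and> open b \<and> a \<times> b \<subseteq> W}"
  have "K \<subseteq> \<Union>?C"
  proof
    fix z assume "z \<in> K"
    then have "z \<in> W" using KW by auto
    then obtain a b where "open a" "open b" "z \<in> a \<times> b" "a \<times> b \<subseteq> W"
      by (rule open_prod_elim[OF W])
    then show "z \<in> \<Union>?C" by blast
  qed
  moreover have "\<And>B. B \<in> ?C \<Longrightarrow> open B" by (auto intro: open_Times)
  ultimately obtain T where T: "T \<subseteq> ?C" and "finite T" "K \<subseteq> \<Union>T" by (rule compactE[OF K])
  moreover have "T \<subseteq> {a \<times> b | a b. open a \<and> open b}" "\<Union>T \<subseteq> W" using T(1) by blast+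
  ultimately show ?thesis using that by simp
qed

lemma regular_borel_prob_eq_on_sigma_rectangles:
  fixes R1 R2 :: "('c::t2_space \<times> 'd::t2_space) measure"
  assumes R1: "regular_borel_prob R1" and R2: "regular_borel_prob R2"
    and eq: "\<And>A B. A \<in> sets borel \<Longrightarrow> B \<in> sets borel \<Longrightarrow> emeasure R1 (A \<times> B) = emeasure R2 (A \<times> B)"
    and D: "D \<in> sigma_sets UNIV borel_rectangles"
  shows "measure R1 D = measure R2 D"
proof -
  have "emeasure R1 D = emeasure R2 D"
  proof (rule emeasure_eq_on_sigma_sets[OF _ _ _ _ Int_stable_borel_rectangles
        UNIV_in_borel_rectangles _ _ _ D])
    show "finite_measure R1" "finite_measure R2"
      using regular_borel_probD(1)[OF R1] regular_borel_probD(1)[OF R2] by (auto simp: prob_space_def)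
    show "space R1 = UNIV" "space R2 = UNIV"
      using regular_borel_probD(3)[OF R1] regular_borel_probD(3)[OF R2] by auto
    show "sigma_sets UNIV borel_rectangles \<subseteq> sets R1" "sigma_sets UNIV borel_rectangles \<subseteq> sets R2"
      using sigma_sets_borel_rectangles regular_borel_probD[OF R1] regular_borel_probD[OF R2]
      by auto
    show "emeasure R1 X = emeasure R2 X" if "X \<in> borel_rectangles" for X
      using that eq by auto
  qed
  then show ?thesis by (simp add: measure_def)
qed

text \<open>An open set is approximated from inside by a compact set, which is covered by a finite union
  of open rectangles inside the open set; such a union lies in the \<sigma>-algebra of rectangles.\<close>
lemma regular_borel_prob_open_le:
  fixes R1 R2 :: "('c::t2_space \<times> 'd::t2_space) measure"
  assumes R1: "regular_borel_prob R1" and R2: "regular_borel_prob R2"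
    and eq: "\<And>D. D \<in> sigma_sets UNIV borel_rectangles \<Longrightarrow> measure R1 D = measure R2 D"
    and W: "open W"
  shows "measure R1 W \<le> measure R2 W"
proof (rule field_le_epsilon)
  interpret P1: prob_space R1 using regular_borel_probD[OF R1] by simp
  interpret P2: prob_space R2 using regular_borel_probD[OF R2] by simp
  have s1: "sets R1 = sets borel" and s2: "sets R2 = sets borel"
    using regular_borel_probD[OF R1] regular_borel_probD[OF R2] by auto
  fix e :: real assume e: "e > 0"
  obtain K where K: "compact K" "K \<subseteq> W" "measure R1 W < measure R1 K + e"
    using regular_borel_prob_inner[OF R1 _ e, of W] W by auto
  obtain T where T: "finite T" "T \<subseteq> {a \<times> b | a b. open a \<and> open b}" "K \<subseteq> \<Union>T" "\<Union>T \<subseteq> W"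
    using compact_subset_open_finite_rectangles[OF K(1) W K(2)] by blast
  interpret S: sigma_algebra UNIV "sigma_sets UNIV borel_rectangles"
    by (rule sigma_algebra_sigma_sets) auto
  have "T \<subseteq> sigma_sets UNIV borel_rectangles"
  proof
    fix X assume "X \<in> T"
    then obtain a b where "X = a \<times> b" "open a" "open b" using T(2) by blast
    then show "X \<in> sigma_sets UNIV borel_rectangles" by (blast intro: borel_open)
  qed
  then have TE: "\<Union>T \<in> sigma_sets UNIV borel_rectangles" using T(1) by (rule S.finite_Union[rotated])
  have "measure R1 K \<le> measure R1 (\<Union>T)"
    using TE sigma_sets_borel_rectangles s1 by (intro P1.finite_measure_mono[OF T(3)]) auto
  also have "\<dots> = measure R2 (\<Union>T)" using eq[OF TE] .
  also have "\<dots> \<le> measure R2 W"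
    using W s2 by (intro P2.finite_measure_mono[OF T(4)]) auto
  finally show "measure R1 W \<le> measure R2 W + e" using K(3) by linarith
qed

lemma regular_borel_prob_eq_TimesI:
  fixes R1 R2 :: "('c::t2_space \<times> 'd::t2_space) measure"
  assumes R1: "regular_borel_prob R1" and R2: "regular_borel_prob R2"
    and eq: "\<And>A B. A \<in> sets borel \<Longrightarrow> B \<in> sets borel \<Longrightarrow> emeasure R1 (A \<times> B) = emeasure R2 (A \<times> B)"
  shows "R1 = R2"
proof (rule regular_borel_prob_eqI_open[OF R1 R2])
  have sigma_eq: "measure R1 D = measure R2 D" if "D \<in> sigma_sets UNIV borel_rectangles" for D
    by (rule regular_borel_prob_eq_on_sigma_rectangles[OF R1 R2 eq that])
  fix W :: "('c \<times> 'd) set" assume W: "open W"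
  show "measure R1 W = measure R2 W"
    by (rule antisym[OF regular_borel_prob_open_le[OF R1 R2 sigma_eq W]
          regular_borel_prob_open_le[OF R2 R1 sigma_eq[symmetric] W]])
qed

section \<open>Measurability of section measures\<close>

lemma sets_borel_section:
  fixes D :: "('c::topological_space \<times> 'd::topological_space) set"
  assumes "D \<in> sets borel"
  shows "Pair x -` D \<in> sets borel"
proof -
  have "(\<lambda>y. (x, y)) \<in> borel_measurable borel"
    by (intro borel_measurable_continuous_onI continuous_intros)
  from measurable_sets_borel[OF this assms] show ?thesis by (simp add: vimage_def)
qed

text \<open>For closed \<open>D\<close> the section measure is even upper semicontinuous: by outer
  regularity of \<open>\<nu>\<close> the section at \<open>x\<close> lies in an open \<open>V\<close> of nearly the same measure,
  and the projection of the compact set \<open>D \<inter> (UNIV \<times> - V)\<close> is a closed set missing \<open>x\<close>.\<close>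
lemma borel_measurable_measure_section_closed:
  fixes \<nu> :: "'b::t2_space measure" and D :: "('a::t2_space \<times> 'b) set"
  assumes N: "regular_borel_prob \<nu>" and cU: "compact (UNIV :: ('a \<times> 'b) set)" and D: "closed D"
  shows "(\<lambda>x. measure \<nu> (Pair x -` D)) \<in> borel_measurable borel"
proof -
  interpret prob_space \<nu> using regular_borel_probD[OF N] by simp
  have sN: "sets \<nu> = sets borel" using regular_borel_probD[OF N] by simp
  have "open {w. measure \<nu> (Pair w -` D) < a}" for a
  proof (subst open_subopen, intro ballI)
    fix x assume "x \<in> {w. measure \<nu> (Pair w -` D) < a}"
    then have lt: "measure \<nu> (Pair x -` D) < a" by simp
    have Db: "Pair x -` D \<in> sets borel" using sets_borel_section D borel_closed by blast
    obtain V where V: "open V" "Pair x -` D \<subseteq> V" "measure \<nu> V < a"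
      using regular_borel_prob_outer[OF N Db, of "a - measure \<nu> (Pair x -` D)"] lt by auto
    let ?C = "D \<inter> (UNIV \<times> (- V))"
    have "closed ?C" using D V(1) by (intro closed_Int closed_Times) auto
    then have "compact (fst ` ?C)"
      using compact_if_closed_in_compact_UNIV[OF cU] by (intro compact_continuous_image continuous_intros)
    then have "open (- (fst ` ?C))" by (simp add: compact_imp_closed open_Compl)
    moreover have "x \<in> - (fst ` ?C)" using V(2) by force
    moreover have "- (fst ` ?C) \<subseteq> {w. measure \<nu> (Pair w -` D) < a}"
    proof
      fix x' assume "x' \<in> - (fst ` ?C)"
      then have "Pair x' -` D \<subseteq> V" by force
      then have "measure \<nu> (Pair x' -` D) \<le> measure \<nu> V"
        using V(1) sN by (intro finite_measure_mono) (auto intro: borel_open)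
      then show "x' \<in> {w. measure \<nu> (Pair w -` D) < a}" using V(3) by simp
    qed
    ultimately show "\<exists>T. open T \<and> x \<in> T \<and> T \<subseteq> {w. measure \<nu> (Pair w -` D) < a}"
      by blast
  qed
  then show ?thesis
    by (subst borel_measurable_iff_less) (auto intro: borel_open)
qed

lemma borel_measurable_emeasure_section:
  fixes \<nu> :: "'b::t2_space measure" and D :: "('a::t2_space \<times> 'b) set"
  assumes N: "regular_borel_prob \<nu>" and cU: "compact (UNIV :: ('a \<times> 'b) set)"
    and D: "D \<in> sets borel"
  shows "(\<lambda>x. emeasure \<nu> (Pair x -` D)) \<in> borel_measurable borel"
proof -
  interpret prob_space \<nu> using regular_borel_probD[OF N] by simp
  have sN: "sets \<nu> = sets borel" "space \<nu> = UNIV" using regular_borel_probD[OF N] by auto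
  have closed_gen: "sets (borel :: ('a \<times> 'b) measure) = sigma_sets UNIV (Collect closed)"
    by (subst borel_eq_closed) (rule sets_measure_of, simp)
  have IS: "Int_stable (Collect closed :: ('a \<times> 'b) set set)"
    by (auto simp: Int_stable_def)
  have "Collect closed \<subseteq> Pow (UNIV :: ('a \<times> 'b) set)" by auto
  from IS this D[unfolded closed_gen] show ?thesis
  proof (induction rule: sigma_sets_induct_disjoint)
    case (basic A)
    have "(\<lambda>x. ennreal (measure \<nu> (Pair x -` A))) \<in> borel_measurable borel"
      using basic by (intro measurable_compose[OF borel_measurable_measure_section_closed[OF N cU]
            measurable_ennreal]) auto
    then show ?case by (simp add: emeasure_eq_measure)
  next
    case empty
    then show ?case by simp
  next
    case (compl A)
    have "Pair x -` A \<in> sets \<nu>" for x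
      using compl(1) closed_gen sets_borel_section sN by auto
    then have "emeasure \<nu> (Pair x -` (UNIV - A)) = 1 - emeasure \<nu> (Pair x -` A)" for x
      using emeasure_compl[of "Pair x -` A" \<nu>] emeasure_space_1 sN by (simp add: vimage_Diff)
    then show ?case using compl(2) by (simp add: borel_measurable_minus_ennreal)
  next
    case (union A)
    have "range (\<lambda>i. Pair x -` A i) \<subseteq> sets \<nu>" for x
      using union(2) closed_gen sets_borel_section sN by auto
    moreover have "disjoint_family (\<lambda>i. Pair x -` A i)" for x
      using union(1) unfolding disjoint_family_on_def by auto
    ultimately have "emeasure \<nu> (Pair x -` (\<Union>i. A i)) = (\<Sum>i. emeasure \<nu> (Pair x -` A i))" for x
      by (simp add: suminf_emeasure vimage_UN)
    then show ?case using union(3) by (simp add: borel_measurable_suminf_order)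
  qed
qed

section \<open>The regular product measure\<close>

definition borel_pair_measure ::
    "'a::topological_space measure \<Rightarrow> 'b::topological_space measure \<Rightarrow> ('a \<times> 'b) measure" where
  "borel_pair_measure \<mu> \<nu> = \<mu> \<bind> (\<lambda>x. distr \<nu> borel (Pair x))"

definition Times_union :: "('a set \<times> 'b set) set \<Rightarrow> ('a \<times> 'b) set" where
  "Times_union T = (\<Union>p\<in>T. fst p \<times> snd p)"

lemma sets_borel_Times_union:
  assumes "finite T" "T \<subseteq> sets borel \<times> sets borel"
  shows "Times_union T \<in> sets borel"
  unfolding Times_union_def
proof (rule sets.finite_UN[OF assms(1)])
  fix p assume "p \<in> T"
  then have "p \<in> sets borel \<times> sets borel" using assms(2) by blast
  then show "fst p \<times> snd p \<in> sets borel" by (auto simp: mem_Times_iff intro: borel_Times)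
qed

lemma Times_union_mono: "T \<subseteq> T' \<Longrightarrow> Times_union T \<subseteq> Times_union T'"
  unfolding Times_union_def by auto

locale regular_pair =
  fixes \<mu> :: "'a::t2_space measure" and \<nu> :: "'b::t2_space measure"
  assumes regular_fst: "regular_borel_prob \<mu>" and regular_snd: "regular_borel_prob \<nu>"
    and compact_fst: "compact (UNIV :: 'a set)" and compact_snd: "compact (UNIV :: 'b set)"
begin

lemma compact_UNIV: "compact (UNIV :: ('a \<times> 'b) set)"
  using compact_Times[OF compact_fst compact_snd] by simp

lemma sets_space_fst: "sets \<mu> = sets borel" "space \<mu> = UNIV"
  using regular_borel_probD[OF regular_fst] by auto

lemma sets_space_snd: "sets \<nu> = sets borel" "space \<nu> = UNIV"
  using regular_borel_probD[OF regular_snd] by auto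

sublocale PM: prob_space \<mu> using regular_borel_probD[OF regular_fst] by simp
sublocale PN: prob_space \<nu> using regular_borel_probD[OF regular_snd] by simp

lemma measurable_Pair_snd: "Pair x \<in> measurable \<nu> (borel :: ('a \<times> 'b) measure)"
proof -
  have "(\<lambda>y. (x, y)) \<in> borel_measurable borel"
    by (intro borel_measurable_continuous_onI continuous_intros)
  then show ?thesis by (simp add: measurable_cong_sets[OF sets_space_snd(1) refl])
qed

lemma measurable_section_kernel:
  "(\<lambda>x. distr \<nu> borel (Pair x)) \<in> measurable \<mu> (subprob_algebra borel)"
proof (rule measurable_subprob_algebra)
  fix x :: 'a
  show "subprob_space (distr \<nu> borel (Pair x))"
    by (intro prob_space_imp_subprob_space PN.prob_space_distr measurable_Pair_snd)
  show "sets (distr \<nu> borel (Pair x)) = sets borel" by simp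
next
  fix A :: "('a \<times> 'b) set" assume A: "A \<in> sets borel"
  have "(\<lambda>x. emeasure \<nu> (Pair x -` A)) \<in> borel_measurable \<mu>"
    using borel_measurable_emeasure_section[OF regular_snd compact_UNIV A]
      measurable_cong_sets[OF sets_space_fst(1) refl] by blast
  moreover have "emeasure (distr \<nu> borel (Pair x)) A = emeasure \<nu> (Pair x -` A)" for x
    using emeasure_distr[OF measurable_Pair_snd A] sets_space_snd(2) by simp
  ultimately show "(\<lambda>x. emeasure (distr \<nu> borel (Pair x)) A) \<in> borel_measurable \<mu>"
    by simp
qed

abbreviation "R \<equiv> borel_pair_measure \<mu> \<nu>"

lemma sets_R: "sets R = sets borel"
  unfolding borel_pair_measure_def by (subst sets_bind[where N=borel]) (auto simp: sets_space_fst)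

lemma space_R: "space R = UNIV"
  using sets_eq_imp_space_eq[OF sets_R] by simp

lemma emeasure_R:
  assumes D: "D \<in> sets borel"
  shows "emeasure R D = (\<integral>\<^sup>+x. emeasure \<nu> (Pair x -` D) \<partial>\<mu>)"
proof -
  have "emeasure R D = (\<integral>\<^sup>+x. emeasure (distr \<nu> borel (Pair x)) D \<partial>\<mu>)"
    unfolding borel_pair_measure_def
    by (rule emeasure_bind[OF _ measurable_section_kernel D]) (simp add: sets_space_fst(2))
  also have "\<dots> = (\<integral>\<^sup>+x. emeasure \<nu> (Pair x -` D) \<partial>\<mu>)"
    using D emeasure_distr[OF measurable_Pair_snd D] sets_space_snd(2) by simp
  finally show ?thesis .
qed

lemma prob_space_R: "prob_space R"
proof (rule prob_spaceI)
  have "emeasure R UNIV = (\<integral>\<^sup>+x. emeasure \<nu> (Pair x -` UNIV) \<partial>\<mu>)"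
    by (rule emeasure_R) simp
  also have "\<dots> = 1" using PN.emeasure_space_1 PM.emeasure_space_1 sets_space_fst(2) sets_space_snd(2) by simp
  finally show "emeasure R (space R) = 1" using space_R by simp
qed

sublocale PR: prob_space R by (rule prob_space_R)

lemma emeasure_R_Times:
  assumes A: "A \<in> sets borel" and B: "B \<in> sets borel"
  shows "emeasure R (A \<times> B) = emeasure \<mu> A * emeasure \<nu> B"
proof -
  have "emeasure \<nu> (Pair x -` (A \<times> B)) = emeasure \<nu> B * indicator A x" for x
    by (cases "x \<in> A") auto
  then have "emeasure R (A \<times> B) = (\<integral>\<^sup>+x. emeasure \<nu> B * indicator A x \<partial>\<mu>)"
    using emeasure_R[OF borel_Times[OF A B]] by simp
  also have "\<dots> = emeasure \<nu> B * emeasure \<mu> A"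
    using A sets_space_fst by (intro nn_integral_cmult_indicator) auto
  finally show ?thesis by (simp add: mult.commute)
qed

lemma measure_R_Times:
  assumes A: "A \<in> sets borel" and B: "B \<in> sets borel"
  shows "measure R (A \<times> B) = measure \<mu> A * measure \<nu> B"
  using emeasure_R_Times[OF A B]
  by (simp add: PR.emeasure_eq_measure PM.emeasure_eq_measure PN.emeasure_eq_measure
      ennreal_mult''[symmetric])

lemma borel_measurable_measure_section:
  assumes D: "D \<in> sets borel"
  shows "(\<lambda>x. measure \<nu> (Pair x -` D)) \<in> borel_measurable \<mu>"
proof -
  have "(\<lambda>x. enn2real (emeasure \<nu> (Pair x -` D))) \<in> borel_measurable borel"
    by (rule borel_measurable_enn2real[OF borel_measurable_emeasure_section[OF regular_snd compact_UNIV D]])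
  then show ?thesis by (simp add: measurable_cong_sets[OF sets_space_fst(1) refl] measure_def)
qed

lemma integrable_measure_section:
  assumes D: "D \<in> sets borel"
  shows "integrable \<mu> (\<lambda>x. measure \<nu> (Pair x -` D))"
  by (rule PM.integrable_const_bound[where B=1]) (auto intro: borel_measurable_measure_section[OF D])

lemma measure_R:
  assumes D: "D \<in> sets borel"
  shows "measure R D = (\<integral>x. measure \<nu> (Pair x -` D) \<partial>\<mu>)"
proof -
  have "emeasure R D = (\<integral>\<^sup>+x. ennreal (measure \<nu> (Pair x -` D)) \<partial>\<mu>)"
    using emeasure_R[OF D] by (simp add: PN.emeasure_eq_measure)
  also have "\<dots> = ennreal (\<integral>x. measure \<nu> (Pair x -` D) \<partial>\<mu>)"
    by (intro nn_integral_eq_integral integrable_measure_section[OF D]) auto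
  finally show ?thesis
    by (simp add: PR.emeasure_eq_measure integral_nonneg_AE)
qed

end

lemma sum_indicator_eq_card_filter:
  assumes "finite S"
  shows "(\<Sum>j\<in>S. indicator (A j) x :: real) = real (card {j\<in>S. x \<in> A j})"
proof -
  have "(\<Sum>j\<in>S. indicator (A j) x :: real) = (\<Sum>j\<in>S. if x \<in> A j then 1 else 0)"
    by (rule sum.cong) (auto simp: indicator_def)
  also have "\<dots> = (\<Sum>j\<in>{j\<in>S. x \<in> A j}. 1)"
    using assms by (rule sum.inter_filter[symmetric])
  finally show ?thesis by simp
qed

lemma le_step_count:
  fixes m :: nat and \<delta> v :: real
  assumes m: "0 < m" and md: "real m * \<delta> = 1" and v: "0 \<le> v" "v \<le> 1"
  shows "v \<le> \<delta> * (1 + real (card {j\<in>{1..m}. real j * \<delta> < v}))"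
proof (rule ccontr)
  define k where "k = card {j\<in>{1..m}. real j * \<delta> < v}"
  have d: "0 < \<delta>" using m md by (metis of_nat_0_less_iff zero_less_mult_pos zero_less_one)
  assume "\<not> ?thesis"
  then have lt: "real (k + 1) * \<delta> < v" unfolding k_def by (simp add: algebra_simps)
  then have "real (k + 1) * \<delta> < real m * \<delta>" using v md by simp
  then have km: "k + 1 < m + 1" using d by simp
  have "{1..k+1} \<subseteq> {j\<in>{1..m}. real j * \<delta> < v}"
  proof
    fix j assume j: "j \<in> {1..k+1}"
    then have "real j * \<delta> \<le> real (k+1) * \<delta>" using d by (intro mult_right_mono) auto
    then show "j \<in> {j\<in>{1..m}. real j * \<delta> < v}" using j km lt by auto
  qed
  then have "card {1..k+1} \<le> k" unfolding k_def by (intro card_mono) auto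
  then show False by simp
qed

lemma step_count_le:
  fixes \<delta> v :: real and K :: "nat \<Rightarrow> 'x set"
  assumes d: "0 \<le> \<delta>" and v: "0 \<le> v"
    and h: "\<And>j. j \<in> {1..m} \<Longrightarrow> x \<in> K j \<Longrightarrow> real j * \<delta> < v"
  shows "\<delta> * real (card {j\<in>{1..m}. x \<in> K j}) \<le> v"
proof (cases "{j\<in>{1..m}. x \<in> K j} = {}")
  case True
  then show ?thesis using v by (simp only: True card.empty of_nat_0 mult_zero_right)
next
  case False
  define J where "J = {j\<in>{1..m}. x \<in> K j}"
  have fJ: "finite J" unfolding J_def by simp
  define k where "k = Max J"
  have kJ: "k \<in> J" unfolding k_def using False fJ J_def by (intro Max_in) auto
  have "J \<subseteq> {1..k}" unfolding k_def using fJ J_def by (auto intro: Max_ge)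
  then have "card J \<le> k" using card_mono[of "{1..k}" J] by simp
  then have "\<delta> * real (card J) \<le> \<delta> * real k" using d by (simp add: mult_left_mono)
  also have "\<dots> < v" using h kJ unfolding J_def by (simp add: mult.commute)
  finally show ?thesis unfolding J_def by simp
qed

text \<open>The layer-cake estimate: \<open>g\<close> lies below the staircase \<open>\<delta> + \<delta> * \<Sum>j. indicator {g > j\<delta>}\<close>,
  and \<open>h\<close> lies above \<open>\<delta> * \<Sum>j. indicator (K j)\<close>.\<close>
lemma (in prob_space) integral_le_staircase:
  fixes g h :: "'a \<Rightarrow> real" and K :: "nat \<Rightarrow> 'a set" and m :: nat
  assumes g: "g \<in> borel_measurable M" "\<And>x. 0 \<le> g x" "\<And>x. g x \<le> 1"
    and h: "integrable M h" "\<And>x. 0 \<le> h x"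
    and m: "0 < m" "real m * \<delta> = 1"
    and K: "\<And>j. K j \<in> events"
      "\<And>j. j \<in> {1..m} \<Longrightarrow> prob {x \<in> space M. real j * \<delta> < g x} \<le> prob (K j) + e"
      "\<And>j x. j \<in> {1..m} \<Longrightarrow> x \<in> K j \<Longrightarrow> real j * \<delta> < h x"
  shows "integral\<^sup>L M g \<le> \<delta> + integral\<^sup>L M h + e"
proof -
  have d: "0 < \<delta>" using m by (metis of_nat_0_less_iff zero_less_mult_pos zero_less_one)
  define U where "U j = {x \<in> space M. real j * \<delta> < g x}" for j :: nat
  have Ub: "U j \<in> events" for j
    using g(1) unfolding U_def borel_measurable_iff_greater by blast
  have ind: "integrable M (\<lambda>x. indicator A x :: real)" if "A \<in> events" for A
    using that by (intro integrable_real_indicator) (auto simp: emeasure_eq_measure)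
  have gi: "integrable M g" using g by (intro integrable_const_bound[where B=1]) auto
  have upper: "g x \<le> \<delta> + \<delta> * (\<Sum>j\<in>{1..m}. indicator (U j) x)" if x: "x \<in> space M" for x
  proof -
    have "{j\<in>{1..m}. x \<in> U j} = {j\<in>{1..m}. real j * \<delta> < g x}" using x by (auto simp: U_def)
    then have "(\<Sum>j\<in>{1..m}. indicator (U j) x :: real) = real (card {j\<in>{1..m}. real j * \<delta> < g x})"
      by (simp add: sum_indicator_eq_card_filter)
    then show ?thesis using le_step_count[OF m g(2,3)] by (simp add: algebra_simps)
  qed
  have lower: "\<delta> * (\<Sum>j\<in>{1..m}. indicator (K j) x) \<le> h x" for x
    using step_count_le[of \<delta> "h x" m x K] d h(2) K(3) by (simp add: sum_indicator_eq_card_filter)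
  have "integral\<^sup>L M g \<le> (\<integral>x. \<delta> + \<delta> * (\<Sum>j\<in>{1..m}. indicator (U j) x) \<partial>M)"
    using upper Ub ind
    by (intro integral_mono gi Bochner_Integration.integrable_add integrable_mult_right
        Bochner_Integration.integrable_sum) auto
  also have "\<dots> = \<delta> + \<delta> * (\<Sum>j\<in>{1..m}. prob (U j))"
    using Ub ind by (simp add: integral_sum integral_add prob_space)
  also have "\<dots> \<le> \<delta> + \<delta> * (\<Sum>j\<in>{1..m}. prob (K j) + e)"
    using K(2) d unfolding U_def by (intro add_left_mono mult_left_mono sum_mono) auto
  also have "\<dots> = \<delta> + \<delta> * (\<Sum>j\<in>{1..m}. prob (K j)) + (real m * \<delta>) * e"
    by (simp add: sum.distrib algebra_simps)
  also have "\<delta> * (\<Sum>j\<in>{1..m}. prob (K j)) = (\<integral>x. \<delta> * (\<Sum>j\<in>{1..m}. indicator (K j) x) \<partial>M)"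
    using K(1) ind by (simp add: integral_sum)
  also have "\<dots> \<le> integral\<^sup>L M h"
    using lower h K(1) ind by (intro integral_mono) auto
  finally show ?thesis using m(2) by simp
qed

context regular_pair
begin

lemma compact_approx_Times:
  assumes A: "A \<in> sets borel" and B: "B \<in> sets borel"
  shows "compact_approx R (A \<times> B)"
  unfolding compact_approx_def
proof (intro allI impI)
  fix e :: real assume e: "e > 0"
  obtain KA where KA: "compact KA" "KA \<subseteq> A" "measure \<mu> A < measure \<mu> KA + e/2"
    using regular_borel_prob_inner[OF regular_fst A, of "e/2"] e by auto
  obtain KB where KB: "compact KB" "KB \<subseteq> B" "measure \<nu> B < measure \<nu> KB + e/2"
    using regular_borel_prob_inner[OF regular_snd B, of "e/2"] e by auto
  have b1: "measure \<mu> KA \<le> measure \<mu> A"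
    using KA A sets_space_fst borel_compact by (intro PM.finite_measure_mono) auto
  have b2: "measure \<nu> KB \<le> measure \<nu> B"
    using KB B sets_space_snd borel_compact by (intro PN.finite_measure_mono) auto
  have "(measure \<mu> A - measure \<mu> KA) * measure \<nu> B \<le> measure \<mu> A - measure \<mu> KA"
    using b1 by (intro mult_right_le_one_le) auto
  moreover have "measure \<mu> KA * (measure \<nu> B - measure \<nu> KB) \<le> measure \<nu> B - measure \<nu> KB"
    using b2 by (intro mult_left_le_one_le) auto
  ultimately have "measure \<mu> A * measure \<nu> B < measure \<mu> KA * measure \<nu> KB + e"
    using KA(3) KB(3) by (simp add: algebra_simps)
  then show "\<exists>K. compact K \<and> K \<subseteq> A \<times> B \<and> measure R (A \<times> B) < measure R K + e"
    using measure_R_Times[OF A B] measure_R_Times[OF borel_compact borel_compact, OF KA(1) KB(1)] KA KB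
    by (intro exI[of _ "KA \<times> KB"]) (auto intro: compact_Times)
qed

lemma compact_approx_Times_union:
  assumes "finite T" "T \<subseteq> sets borel \<times> sets borel"
  shows "compact_approx R (Times_union T)"
proof -
  have p: "fst p \<in> sets borel" "snd p \<in> sets borel" if "p \<in> T" for p
    using that assms(2) by (auto simp: mem_Times_iff)
  then have "(\<lambda>p. fst p \<times> snd p) ` T \<subseteq> sets borel" by (auto intro: borel_Times)
  moreover have "compact_approx R D" if "D \<in> (\<lambda>p. fst p \<times> snd p) ` T" for D
    using that p by (auto intro: compact_approx_Times)
  ultimately show ?thesis unfolding Times_union_def
    using assms(1) by (intro compact_approx_finite_Union[OF PR.finite_measure_axioms sets_R]) auto
qed

text \<open>By the tube lemma, each \<open>x \<in> K\<close> has a neighbourhood \<open>X\<close> and a compact \<open>L\<close> with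
  \<open>X \<times> L \<subseteq> W\<close> and \<open>\<nu> L > t\<close>; finitely many such \<open>X\<close> cover \<open>K\<close>.\<close>
lemma Times_union_section_gt:
  assumes W: "open W" and K: "compact K" and t: "\<And>x. x \<in> K \<Longrightarrow> t < measure \<nu> (Pair x -` W)"
  obtains T where "finite T" "T \<subseteq> sets borel \<times> sets borel" "Times_union T \<subseteq> W"
    "\<And>x. x \<in> K \<Longrightarrow> t < measure \<nu> (Pair x -` Times_union T)"
proof -
  have "\<exists>X L. open X \<and> x \<in> X \<and> compact L \<and> X \<times> L \<subseteq> W \<and> t < measure \<nu> L" if x: "x \<in> K" for x
  proof -
    have Wx: "Pair x -` W \<in> sets borel" using sets_borel_section borel_open W by blast
    obtain L where L: "compact L" "L \<subseteq> Pair x -` W"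
      "measure \<nu> (Pair x -` W) < measure \<nu> L + (measure \<nu> (Pair x -` W) - t)"
      using regular_borel_prob_inner[OF regular_snd Wx, of "measure \<nu> (Pair x -` W) - t"] t[OF x]
      by auto
    have "{x} \<times> L \<subseteq> W" using L(2) by auto
    then obtain X where "x \<in> X" "open X" "X \<times> L \<subseteq> W" using Elementary_Topology.tube_lemma[OF L(1) W] by blast
    then show ?thesis using L by auto
  qed
  then obtain X L where XL: "\<And>x. x \<in> K \<Longrightarrow> open (X x) \<and> x \<in> X x \<and> compact (L x) \<and>
      X x \<times> L x \<subseteq> W \<and> t < measure \<nu> (L x)"
    by metis
  have "K \<subseteq> (\<Union>x\<in>K. X x)" using XL by blast
  then obtain C where C: "C \<subseteq> K" "finite C" "K \<subseteq> (\<Union>x\<in>C. X x)"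
    using compactE_image[OF K, of K X] XL by blast
  define T where "T = (\<lambda>x. (X x, L x)) ` C"
  have TU: "Times_union T = (\<Union>x\<in>C. X x \<times> L x)" unfolding Times_union_def T_def by auto
  show ?thesis
  proof
    show "finite T" unfolding T_def using C(2) by simp
    show "T \<subseteq> sets borel \<times> sets borel"
      unfolding T_def using C(1) XL by (auto intro: borel_open borel_compact)
    show "Times_union T \<subseteq> W" unfolding TU using C(1) XL by blast
    then have TUb: "Times_union T \<in> sets borel"
      using \<open>finite T\<close> \<open>T \<subseteq> sets borel \<times> sets borel\<close> by (intro sets_borel_Times_union)
    fix x assume "x \<in> K"
    then obtain z where z: "z \<in> C" "x \<in> X z" using C(3) by blast
    then have "L z \<subseteq> Pair x -` Times_union T" unfolding TU by auto
    then have "measure \<nu> (L z) \<le> measure \<nu> (Pair x -` Times_union T)"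
      using sets_borel_section[OF TUb] sets_space_snd by (intro PN.finite_measure_mono) auto
    moreover have "t < measure \<nu> (L z)" using XL z C(1) by blast
    ultimately show "t < measure \<nu> (Pair x -` Times_union T)" by simp
  qed
qed

lemma Times_union_section_gt_finite:
  assumes W: "open W" and J: "finite J" and K: "\<And>j. compact (K j)"
    and t: "\<And>j x. j \<in> J \<Longrightarrow> x \<in> K j \<Longrightarrow> t j < measure \<nu> (Pair x -` W)"
  obtains T where "finite T" "T \<subseteq> sets borel \<times> sets borel" "Times_union T \<subseteq> W"
    "\<And>j x. j \<in> J \<Longrightarrow> x \<in> K j \<Longrightarrow> t j < measure \<nu> (Pair x -` Times_union T)"
proof -
  have "\<forall>j\<in>J. \<exists>T. finite T \<and> T \<subseteq> sets borel \<times> sets borel \<and> Times_union T \<subseteq> W \<and>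
      (\<forall>x\<in>K j. t j < measure \<nu> (Pair x -` Times_union T))"
  proof
    fix j assume "j \<in> J"
    show "\<exists>T. finite T \<and> T \<subseteq> sets borel \<times> sets borel \<and> Times_union T \<subseteq> W \<and>
      (\<forall>x\<in>K j. t j < measure \<nu> (Pair x -` Times_union T))"
      by (rule Times_union_section_gt[OF W K]) (use t \<open>j \<in> J\<close> in auto)
  qed
  then obtain T where T: "\<forall>j\<in>J. finite (T j) \<and> T j \<subseteq> sets borel \<times> sets borel \<and>
      Times_union (T j) \<subseteq> W \<and> (\<forall>x\<in>K j. t j < measure \<nu> (Pair x -` Times_union (T j)))"
    by (metis bchoice)
  define T' where "T' = (\<Union>j\<in>J. T j)"
  have U: "Times_union T' = (\<Union>j\<in>J. Times_union (T j))" unfolding T'_def Times_union_def by auto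
  show ?thesis
  proof
    show fin: "finite T'" and sub: "T' \<subseteq> sets borel \<times> sets borel"
      using T J unfolding T'_def by blast+
    show "Times_union T' \<subseteq> W" using T U by blast
    fix j x assume j: "j \<in> J" and x: "x \<in> K j"
    have "Times_union (T j) \<subseteq> Times_union T'" using U j by auto
    then have "measure \<nu> (Pair x -` Times_union (T j)) \<le> measure \<nu> (Pair x -` Times_union T')"
      using sets_borel_section[OF sets_borel_Times_union[OF fin sub]] sets_space_snd
      by (intro PN.finite_measure_mono) auto
    then show "t j < measure \<nu> (Pair x -` Times_union T')" using T j x by force
  qed
qed

lemma Times_union_approx_open:
  assumes W: "open W" and e: "e > 0"
  obtains T where "finite T" "T \<subseteq> sets borel \<times> sets borel" "Times_union T \<subseteq> W"
    "measure R W < measure R (Times_union T) + e"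
proof -
  have Wb: "W \<in> sets borel" using W by (rule borel_open)
  define g where "g x = measure \<nu> (Pair x -` W)" for x
  obtain m :: nat where m: "0 < m" "inverse (real m) < e/2"
    using ex_inverse_of_nat_less[of "e/2"] e by auto
  define \<delta> where "\<delta> = 1 / real m"
  have md: "real m * \<delta> = 1" and de: "\<delta> < e/2" using m unfolding \<delta>_def by (auto simp: field_simps)
  have "{x. real j * \<delta> < g x} \<in> sets borel" for j
    using borel_measurable_measure_section[OF Wb] sets_space_fst
    unfolding g_def borel_measurable_iff_greater by simp
  then have "\<forall>j. \<exists>K. compact K \<and> K \<subseteq> {x. real j * \<delta> < g x} \<and>
      measure \<mu> {x. real j * \<delta> < g x} < measure \<mu> K + e/2"
    using regular_borel_prob_inner[OF regular_fst] e by auto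
  then obtain K where K: "\<And>j. compact (K j)" "\<And>j. K j \<subseteq> {x. real j * \<delta> < g x}"
      "\<And>j. measure \<mu> {x. real j * \<delta> < g x} < measure \<mu> (K j) + e/2"
    by metis
  have levels: "real j * \<delta> < measure \<nu> (Pair x -` W)" if "x \<in> K j" for j x
    using K(2) that by (auto simp: g_def)
  obtain T where T: "finite T" "T \<subseteq> sets borel \<times> sets borel" "Times_union T \<subseteq> W"
    "\<And>j x. j \<in> {1..m} \<Longrightarrow> x \<in> K j \<Longrightarrow> real j * \<delta> < measure \<nu> (Pair x -` Times_union T)"
    by (rule Times_union_section_gt_finite[OF W finite_atLeastAtMost[of 1 m] K(1), where t="\<lambda>j. real j * \<delta>"])
      (use levels in auto)
  have Tb: "Times_union T \<in> sets borel" using sets_borel_Times_union[OF T(1,2)] .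
  define h where "h x = measure \<nu> (Pair x -` Times_union T)" for x
  have "measure R W = (\<integral>x. g x \<partial>\<mu>)" unfolding g_def by (rule measure_R[OF Wb])
  also have "\<dots> \<le> \<delta> + (\<integral>x. h x \<partial>\<mu>) + e/2"
  proof (rule PM.integral_le_staircase[OF _ _ _ _ _ m(1) md])
    show "g \<in> borel_measurable \<mu>" unfolding g_def by (rule borel_measurable_measure_section[OF Wb])
    show "integrable \<mu> h" unfolding h_def by (rule integrable_measure_section[OF Tb])
    show "K j \<in> PM.events" for j using borel_compact[OF K(1)] sets_space_fst by simp
    show "PM.prob {x \<in> space \<mu>. real j * \<delta> < g x} \<le> PM.prob (K j) + e/2" for j
      using K(3)[of j] sets_space_fst by simp
  qed (auto simp: g_def h_def T(4))
  also have "(\<integral>x. h x \<partial>\<mu>) = measure R (Times_union T)"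
    unfolding h_def by (rule measure_R[OF Tb, symmetric])
  finally have "measure R W < measure R (Times_union T) + e" using de by linarith
  with T(1-3) show ?thesis by (rule that)
qed

lemma compact_approx_open:
  assumes W: "open W"
  shows "compact_approx R W"
  unfolding compact_approx_def
proof (intro allI impI)
  fix e :: real assume e: "e > 0"
  obtain T where T: "finite T" "T \<subseteq> sets borel \<times> sets borel" "Times_union T \<subseteq> W"
    "measure R W < measure R (Times_union T) + e/2"
    using Times_union_approx_open[OF W, of "e/2"] e by auto
  obtain C where C: "compact C" "C \<subseteq> Times_union T" "measure R (Times_union T) < measure R C + e/2"
    by (rule compact_approxE[OF compact_approx_Times_union[OF T(1,2)], of "e/2"]) (use e in auto)
  show "\<exists>K. compact K \<and> K \<subseteq> W \<and> measure R W < measure R K + e"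
    using C T by (intro exI[of _ C]) auto
qed

lemma regular_borel_prob_R: "regular_borel_prob R"
  by (rule regular_borel_probI_open[OF prob_space_R sets_R compact_UNIV compact_approx_open])

lemma emeasure_R_eq_pair_measure:
  assumes D: "D \<in> sets (\<mu> \<Otimes>\<^sub>M \<nu>)"
  shows "emeasure R D = emeasure (\<mu> \<Otimes>\<^sub>M \<nu>) D"
proof -
  have sets_pair: "sets (\<mu> \<Otimes>\<^sub>M \<nu>) = sigma_sets UNIV borel_rectangles"
    by (simp add: sets_pair_measure sets_space_fst sets_space_snd)
  show ?thesis
  proof (rule emeasure_eq_on_sigma_sets[OF PR.finite_measure_axioms _ space_R _
        Int_stable_borel_rectangles UNIV_in_borel_rectangles])
    show "finite_measure (\<mu> \<Otimes>\<^sub>M \<nu>)"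
      by (intro finite_measure_pair_measure PM.finite_measure_axioms PN.finite_measure_axioms)
    show "space (\<mu> \<Otimes>\<^sub>M \<nu>) = UNIV" by (simp add: space_pair_measure sets_space_fst sets_space_snd)
    show "sigma_sets UNIV borel_rectangles \<subseteq> sets R"
      using sigma_sets_borel_rectangles sets_R by simp
    show "sigma_sets UNIV borel_rectangles \<subseteq> sets (\<mu> \<Otimes>\<^sub>M \<nu>)" "D \<in> sigma_sets UNIV borel_rectangles"
      using D sets_pair by simp_all
    fix X :: "('a \<times> 'b) set" assume "X \<in> borel_rectangles"
    then obtain A B where X: "X = A \<times> B" "A \<in> sets borel" "B \<in> sets borel" by blast
    then show "emeasure R X = emeasure (\<mu> \<Otimes>\<^sub>M \<nu>) X"
      using emeasure_R_Times[OF X(2,3)] PN.emeasure_pair_measure_Times[of A \<mu> B] sets_space_fst sets_space_snd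
      by simp
  qed
qed

lemma reg_prod_eq_R: "reg_prod \<mu> \<nu> = R"
  unfolding reg_prod_def
proof (rule the_equality)
  show "regular_borel_prob R \<and> (\<forall>D\<in>sets (\<mu> \<Otimes>\<^sub>M \<nu>). emeasure R D = emeasure (\<mu> \<Otimes>\<^sub>M \<nu>) D)"
    using regular_borel_prob_R emeasure_R_eq_pair_measure by blast
  fix Q assume Q: "regular_borel_prob Q \<and> (\<forall>D\<in>sets (\<mu> \<Otimes>\<^sub>M \<nu>). emeasure Q D = emeasure (\<mu> \<Otimes>\<^sub>M \<nu>) D)"
  show "Q = R"
  proof (rule regular_borel_prob_eq_TimesI[OF _ regular_borel_prob_R])
    show "regular_borel_prob Q" using Q by blast
    fix A :: "'a set" and B :: "'b set" assume A: "A \<in> sets borel" and B: "B \<in> sets borel"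
    have "A \<times> B \<in> sets (\<mu> \<Otimes>\<^sub>M \<nu>)" using A B sets_space_fst sets_space_snd by (intro pair_measureI) auto
    then show "emeasure Q (A \<times> B) = emeasure R (A \<times> B)"
      using Q emeasure_R_eq_pair_measure by auto
  qed
qed

lemma regular_borel_prob_reg_prod: "regular_borel_prob (reg_prod \<mu> \<nu>)"
  using reg_prod_eq_R regular_borel_prob_R by simp

lemma measure_reg_prod_Times:
  "A \<in> sets borel \<Longrightarrow> B \<in> sets borel \<Longrightarrow> measure (reg_prod \<mu> \<nu>) (A \<times> B) = measure \<mu> A * measure \<nu> B"
  using reg_prod_eq_R measure_R_Times by simp

end

section \<open>The coupling through a finite partition\<close>

lemma image_add_right_eq_vimage_diff: "(\<lambda>e. e + y) ` E = (\<lambda>e. e - y) -` (E :: 'g::group_add set)"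
proof
  show "(\<lambda>e. e + y) ` E \<subseteq> (\<lambda>e. e - y) -` E" by auto
  show "(\<lambda>e. e - y) -` E \<subseteq> (\<lambda>e. e + y) ` E"
  proof
    fix z assume "z \<in> (\<lambda>e. e - y) -` E"
    then have "z - y \<in> E" by simp
    moreover have "z = (z - y) + y" by simp
    ultimately show "z \<in> (\<lambda>e. e + y) ` E" by blast
  qed
qed

lemma continuous_vimage_borel:
  assumes "continuous_on UNIV (f :: 'c::topological_space \<Rightarrow> 'd::topological_space)" "D \<in> sets borel"
  shows "f -` D \<in> sets borel"
  using measurable_sets_borel[OF borel_measurable_continuous_onI[OF assms(1)] assms(2)] .

lemma sets_borel_translate:
  assumes "E \<in> sets borel"
  shows "(\<lambda>e. e + y) ` E \<in> sets (borel :: 'g::topological_group_add measure)"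
  unfolding image_add_right_eq_vimage_diff
  by (rule continuous_vimage_borel[OF _ assms]) (intro continuous_intros)

lemma emeasure_density_sum_indicator:
  fixes c :: "'i \<Rightarrow> ennreal"
  assumes I: "finite I" and S: "\<And>i. i \<in> I \<Longrightarrow> S i \<in> sets M" and D: "D \<in> sets M"
  shows "emeasure (density M (\<lambda>z. \<Sum>i\<in>I. c i * indicator (S i) z)) D = (\<Sum>i\<in>I. c i * emeasure M (D \<inter> S i))"
proof -
  have "emeasure (density M (\<lambda>z. \<Sum>i\<in>I. c i * indicator (S i) z)) D
      = (\<integral>\<^sup>+z. (\<Sum>i\<in>I. c i * indicator (S i) z) * indicator D z \<partial>M)"
    using S D by (intro emeasure_density) auto
  also have "\<dots> = (\<integral>\<^sup>+z. (\<Sum>i\<in>I. c i * indicator (D \<inter> S i) z) \<partial>M)"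
  proof -
    have "(\<Sum>i\<in>I. c i * indicator (S i) z) * indicator D z = (\<Sum>i\<in>I. c i * indicator (D \<inter> S i) z)" for z
      by (cases "z \<in> D") (simp_all add: indicator_inter_arith)
    then show ?thesis by simp
  qed
  also have "\<dots> = (\<Sum>i\<in>I. \<integral>\<^sup>+z. c i * indicator (D \<inter> S i) z \<partial>M)"
    using S D by (intro nn_integral_sum) auto
  also have "\<dots> = (\<Sum>i\<in>I. c i * emeasure M (D \<inter> S i))"
    using S D by (intro sum.cong refl nn_integral_cmult_indicator) auto
  finally show ?thesis .
qed

lemma finite_borel_partition_sum_measure:
  assumes P: "finite_borel_partition P" and M: "finite_measure M" "sets M = sets borel"
    and A: "A \<in> sets borel" and g: "g \<in> borel_measurable borel"
  shows "(\<Sum>E\<in>P. measure M (A \<inter> g -` E)) = measure M A"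
proof -
  have Pfin: "finite P" and Pb: "P \<subseteq> sets borel" and PU: "\<Union>P = UNIV"
    and Pdisj: "\<And>E F. E \<in> P \<Longrightarrow> F \<in> P \<Longrightarrow> E \<noteq> F \<Longrightarrow> E \<inter> F = {}"
    using P unfolding finite_borel_partition_def by auto
  have gE: "g -` E \<in> sets borel" if "E \<in> P" for E
    using measurable_sets_borel[OF g] Pb that by auto
  have disj: "disjoint_family_on (\<lambda>E. A \<inter> g -` E) P"
    unfolding disjoint_family_on_def
  proof (intro ballI impI)
    fix E F assume "E \<in> P" "F \<in> P" "E \<noteq> F"
    then have "E \<inter> F = {}" by (rule Pdisj)
    then show "A \<inter> g -` E \<inter> (A \<inter> g -` F) = {}" by auto
  qed
  have "measure M (\<Union>E\<in>P. A \<inter> g -` E) = (\<Sum>E\<in>P. measure M (A \<inter> g -` E))"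
  proof (rule measure_finite_Union[OF Pfin _ disj])
    show "(\<lambda>E. A \<inter> g -` E) ` P \<subseteq> sets M" using gE A M(2) by auto
    show "emeasure M (A \<inter> g -` E) \<noteq> \<infinity>" for E
      using finite_measure.emeasure_finite[OF M(1)] by simp
  qed
  moreover have "(\<Union>E\<in>P. A \<inter> g -` E) = A" using PU by auto
  ultimately show ?thesis by simp
qed

lemma sum_pos_part:
  assumes "finite P" and "\<And>E. E \<in> P \<Longrightarrow> measure L E = 0 \<Longrightarrow> F E = 0"
  shows "(\<Sum>E\<in>pos_part L P. F E) = (\<Sum>E\<in>P. F E)"
  using assms by (intro sum.mono_neutral_left) (auto simp: pos_part_def less_le)

lemma measure_reg_prod_vimage_map:
  fixes M1 :: "'a::t2_space measure" and M2 :: "'b::t2_space measure"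
    and L1 :: "'c::t2_space measure" and L2 :: "'d::t2_space measure"
  assumes "regular_pair M1 M2" "regular_pair L1 L2"
    and f1: "continuous_on UNIV f1" "image_measure_eq f1 M1 (measure L1)"
    and f2: "continuous_on UNIV f2" "image_measure_eq f2 M2 (measure L2)"
    and X: "X \<in> sets borel"
  shows "measure (reg_prod M1 M2) ((\<lambda>(u, v). (f1 u, f2 v)) -` X) = measure (reg_prod L1 L2) X"
proof -
  interpret M: regular_pair M1 M2 by fact
  interpret L: regular_pair L1 L2 by fact
  define f where "f = (\<lambda>(u, v). (f1 u, f2 v))"
  have "continuous_on UNIV (\<lambda>z::'a \<times> 'b. f1 (fst z))" "continuous_on UNIV (\<lambda>z::'a \<times> 'b. f2 (snd z))"
    by (rule continuous_on_compose2[OF f1(1), of UNIV fst] continuous_on_compose2[OF f2(1), of UNIV snd];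
        auto intro: continuous_intros)+
  then have fc: "continuous_on UNIV f"
    unfolding f_def by (simp add: case_prod_beta' continuous_on_Pair)
  have "sets (reg_prod M1 M2) = sets borel" by (simp add: M.reg_prod_eq_R M.sets_R)
  then have fm: "f \<in> measurable (reg_prod M1 M2) borel"
    using borel_measurable_continuous_onI[OF fc] measurable_cong_sets[of _ borel] by blast
  have distr_eq: "distr (reg_prod M1 M2) borel f = reg_prod L1 L2"
  proof (rule regular_borel_prob_eq_TimesI)
    show "regular_borel_prob (distr (reg_prod M1 M2) borel f)"
      by (rule regular_borel_prob_distr[OF M.regular_borel_prob_reg_prod fc])
    show "regular_borel_prob (reg_prod L1 L2)" by (rule L.regular_borel_prob_reg_prod)
    fix A :: "'c set" and B :: "'d set" assume A: "A \<in> sets borel" and B: "B \<in> sets borel"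
    have f1A: "f1 -` A \<in> sets borel" and f2B: "f2 -` B \<in> sets borel"
      using continuous_vimage_borel f1(1) f2(1) A B by blast+
    have "f -` (A \<times> B) = f1 -` A \<times> f2 -` B" unfolding f_def by auto
    then have "emeasure (distr (reg_prod M1 M2) borel f) (A \<times> B) = emeasure (reg_prod M1 M2) (f1 -` A \<times> f2 -` B)"
      using emeasure_distr[OF fm borel_Times[OF A B]] M.reg_prod_eq_R M.space_R by simp
    also have "\<dots> = ennreal (measure L1 A * measure L2 B)"
      using M.measure_reg_prod_Times[OF f1A f2B] f1(2) f2(2) A B M.reg_prod_eq_R
      by (simp add: M.PR.emeasure_eq_measure image_measure_eq_def)
    also have "\<dots> = emeasure (reg_prod L1 L2) (A \<times> B)"
      using L.measure_reg_prod_Times[OF A B] L.reg_prod_eq_R by (simp add: L.PR.emeasure_eq_measure)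
    finally show "emeasure (distr (reg_prod M1 M2) borel f) (A \<times> B) = emeasure (reg_prod L1 L2) (A \<times> B)" .
  qed
  have "measure (reg_prod L1 L2) X = measure (reg_prod M1 M2) (f -` X)"
    using measure_distr[OF fm X] M.reg_prod_eq_R M.space_R by (simp add: distr_eq[symmetric])
  then show ?thesis unfolding f_def by simp
qed

locale coupling_data =
  fixes L :: "'g::{topological_group_add, t2_space} measure"
    and M1 :: "'a::t2_space measure" and M2 :: "'b::t2_space measure"
    and f1 :: "'a \<Rightarrow> 'g" and f2 :: "'b \<Rightarrow> 'g"
    and P :: "'g set set" and y :: 'g
  assumes compact_fst: "compact (UNIV :: 'a set)" and compact_snd: "compact (UNIV :: 'b set)"
    and compact_group: "compact (UNIV :: 'g set)"
    and haar: "haar_prob L"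
    and continuous_fst: "continuous_on UNIV f1" and continuous_snd: "continuous_on UNIV f2"
    and regular_fst: "regular_borel_prob M1" and regular_snd: "regular_borel_prob M2"
    and image_fst: "image_measure_eq f1 M1 (measure L)"
    and image_snd: "image_measure_eq f2 M2 (measure L)"
    and partition: "finite_borel_partition P"
begin

abbreviation "Q \<equiv> reg_prod M1 M2"

definition cell :: "'g set \<Rightarrow> ('a \<times> 'b) set" where
  "cell E = f1 -` E \<times> f2 -` ((\<lambda>e. e + y) ` E)"

definition coupling :: "('a \<times> 'b) measure" where
  "coupling = density Q (\<lambda>z. \<Sum>E\<in>pos_part L P. ennreal (1 / measure L E) * indicator (cell E) z)"

lemma regular_pair_fst_snd: "regular_pair M1 M2"
  by unfold_locales (fact regular_fst regular_snd compact_fst compact_snd)+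

lemma regular_pair_group: "regular_pair L L"
  using haar compact_group unfolding haar_prob_def by unfold_locales auto

lemma measure_translate: "E \<in> sets borel \<Longrightarrow> measure L ((\<lambda>e. e + y) ` E) = measure L E"
  using haar unfolding haar_prob_def by blast

lemma finite_P: "finite P" and sets_P: "E \<in> P \<Longrightarrow> E \<in> sets borel"
  using partition unfolding finite_borel_partition_def by auto

lemma sets_vimage_fst: "E \<in> sets borel \<Longrightarrow> f1 -` E \<in> sets borel"
  and sets_vimage_snd: "E \<in> sets borel \<Longrightarrow> f2 -` E \<in> sets borel"
  using continuous_vimage_borel continuous_fst continuous_snd by blast+

lemma measure_vimage_fst: "E \<in> sets borel \<Longrightarrow> measure M1 (f1 -` E) = measure L E"
  and measure_vimage_snd: "E \<in> sets borel \<Longrightarrow> measure M2 (f2 -` E) = measure L E"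
  using image_fst image_snd unfolding image_measure_eq_def by auto

lemma measure_Q_Times:
  "A \<in> sets borel \<Longrightarrow> B \<in> sets borel \<Longrightarrow> measure Q (A \<times> B) = measure M1 A * measure M2 B"
  by (rule regular_pair.measure_reg_prod_Times[OF regular_pair_fst_snd])

lemma sets_Q: "sets Q = sets borel" and space_Q: "space Q = UNIV"
  using regular_borel_probD[OF regular_pair.regular_borel_prob_reg_prod[OF regular_pair_fst_snd]]
  by auto

lemma prob_space_Q: "prob_space Q"
  using regular_borel_probD[OF regular_pair.regular_borel_prob_reg_prod[OF regular_pair_fst_snd]]
  by auto

sublocale PQ: prob_space Q by (rule prob_space_Q)

lemma sets_cell: "E \<in> P \<Longrightarrow> cell E \<in> sets borel"
  unfolding cell_def by (intro borel_Times sets_vimage_fst sets_vimage_snd sets_borel_translate sets_P)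

lemma emeasure_coupling:
  assumes D: "D \<in> sets borel"
  shows "emeasure coupling D = ennreal (mu_yE L M1 M2 f1 f2 y P D)"
proof -
  have "emeasure coupling D = (\<Sum>E\<in>pos_part L P. ennreal (1 / measure L E) * emeasure Q (D \<inter> cell E))"
    unfolding coupling_def using finite_P sets_cell D sets_Q
    by (intro emeasure_density_sum_indicator) (auto simp: pos_part_def)
  also have "\<dots> = (\<Sum>E\<in>pos_part L P. ennreal (measure Q (D \<inter> cell E) / measure L E))"
    by (intro sum.cong refl)
      (simp add: PQ.emeasure_eq_measure ennreal_mult''[symmetric] pos_part_def)
  also have "\<dots> = ennreal (mu_yE L M1 M2 f1 f2 y P D)"
    unfolding mu_yE_def cell_def by (intro sum_ennreal) (auto simp: pos_part_def)
  finally show ?thesis .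
qed

lemma mu_yE_nonneg: "0 \<le> mu_yE L M1 M2 f1 f2 y P D"
  unfolding mu_yE_def by (intro sum_nonneg) (auto simp: pos_part_def)

lemma measure_coupling: "D \<in> sets borel \<Longrightarrow> measure coupling D = mu_yE L M1 M2 f1 f2 y P D"
  using emeasure_coupling mu_yE_nonneg by (simp add: measure_def)

lemma mu_yE_Times_UNIV:
  assumes A: "A \<in> sets borel"
  shows "mu_yE L M1 M2 f1 f2 y P (A \<times> UNIV) = measure M1 A"
proof -
  have "mu_yE L M1 M2 f1 f2 y P (A \<times> UNIV) = (\<Sum>E\<in>pos_part L P. measure M1 (A \<inter> f1 -` E))"
    unfolding mu_yE_def
  proof (intro sum.cong refl)
    fix E assume E: "E \<in> pos_part L P"
    then have Eb: "E \<in> sets borel" and pos: "measure L E > 0" using sets_P by (auto simp: pos_part_def)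
    have "(A \<times> UNIV) \<inter> (f1 -` E \<times> f2 -` ((\<lambda>e. e + y) ` E)) = (A \<inter> f1 -` E) \<times> f2 -` ((\<lambda>e. e + y) ` E)"
      by auto
    moreover have "measure Q ((A \<inter> f1 -` E) \<times> f2 -` ((\<lambda>e. e + y) ` E)) = measure M1 (A \<inter> f1 -` E) * measure L E"
      using A Eb by (simp add: measure_Q_Times sets.Int sets_vimage_fst sets_vimage_snd sets_borel_translate
          measure_vimage_snd measure_translate)
    ultimately show "measure Q ((A \<times> UNIV) \<inter> (f1 -` E \<times> f2 -` ((\<lambda>e. e + y) ` E))) / measure L E = measure M1 (A \<inter> f1 -` E)"
      using pos by simp
  qed
  also have "\<dots> = (\<Sum>E\<in>P. measure M1 (A \<inter> f1 -` E))"
  proof (rule sum_pos_part[OF finite_P])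
    fix E assume "E \<in> P" "measure L E = 0"
    then have "measure M1 (f1 -` E) = 0" using sets_P measure_vimage_fst by simp
    then show "measure M1 (A \<inter> f1 -` E) = 0"
      using regular_borel_probD[OF regular_fst] \<open>E \<in> P\<close> sets_P sets_vimage_fst
      by (metis inf_le2 measure_nonneg antisym prob_space.finite_measure finite_measure.finite_measure_mono)
  qed
  also have "\<dots> = measure M1 A"
    using regular_borel_probD[OF regular_fst] A borel_measurable_continuous_onI[OF continuous_fst]
    by (intro finite_borel_partition_sum_measure[OF partition]) (auto simp: prob_space_def)
  finally show ?thesis .
qed

lemma mu_yE_UNIV_Times:
  assumes B: "B \<in> sets borel"
  shows "mu_yE L M1 M2 f1 f2 y P (UNIV \<times> B) = measure M2 B"
proof -
  have translate: "f2 -` ((\<lambda>e. e + y) ` E) = (\<lambda>v. f2 v - y) -` E" for E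
    by (simp add: image_add_right_eq_vimage_diff vimage_def)
  have "mu_yE L M1 M2 f1 f2 y P (UNIV \<times> B) = (\<Sum>E\<in>pos_part L P. measure M2 (B \<inter> f2 -` ((\<lambda>e. e + y) ` E)))"
    unfolding mu_yE_def
  proof (intro sum.cong refl)
    fix E assume E: "E \<in> pos_part L P"
    then have Eb: "E \<in> sets borel" and pos: "measure L E > 0" using sets_P by (auto simp: pos_part_def)
    have "(UNIV \<times> B) \<inter> (f1 -` E \<times> f2 -` ((\<lambda>e. e + y) ` E)) = f1 -` E \<times> (B \<inter> f2 -` ((\<lambda>e. e + y) ` E))"
      by auto
    moreover have "measure Q (f1 -` E \<times> (B \<inter> f2 -` ((\<lambda>e. e + y) ` E))) = measure L E * measure M2 (B \<inter> f2 -` ((\<lambda>e. e + y) ` E))"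
      using B Eb by (simp add: measure_Q_Times sets.Int sets_vimage_fst sets_vimage_snd sets_borel_translate
          measure_vimage_fst)
    ultimately show "measure Q ((UNIV \<times> B) \<inter> (f1 -` E \<times> f2 -` ((\<lambda>e. e + y) ` E))) / measure L E = measure M2 (B \<inter> f2 -` ((\<lambda>e. e + y) ` E))"
      using pos by simp
  qed
  also have "\<dots> = (\<Sum>E\<in>P. measure M2 (B \<inter> f2 -` ((\<lambda>e. e + y) ` E)))"
  proof (rule sum_pos_part[OF finite_P])
    fix E assume "E \<in> P" "measure L E = 0"
    then have "measure M2 (f2 -` ((\<lambda>e. e + y) ` E)) = 0"
      by (simp add: sets_P measure_vimage_snd sets_borel_translate measure_translate)
    then show "measure M2 (B \<inter> f2 -` ((\<lambda>e. e + y) ` E)) = 0"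
      using regular_borel_probD[OF regular_snd] \<open>E \<in> P\<close> sets_P sets_vimage_snd sets_borel_translate
      by (metis inf_le2 measure_nonneg antisym prob_space.finite_measure finite_measure.finite_measure_mono)
  qed
  also have "\<dots> = measure M2 B"
    unfolding translate using regular_borel_probD[OF regular_snd] B
    by (intro finite_borel_partition_sum_measure[OF partition])
      (auto simp: prob_space_def intro!: borel_measurable_continuous_onI continuous_on_diff
        continuous_snd continuous_intros)
  finally show ?thesis .
qed

lemma prob_space_coupling: "prob_space coupling"
proof (rule prob_spaceI)
  have "space coupling = UNIV \<times> UNIV" unfolding coupling_def by (simp add: space_Q)
  then show "emeasure coupling (space coupling) = 1"
    using emeasure_coupling[of "UNIV \<times> UNIV"] mu_yE_Times_UNIV[of UNIV]
      prob_space.prob_space[OF regular_borel_probD(1)[OF regular_fst]] regular_borel_probD(3)[OF regular_fst]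
    by simp
qed

lemma regular_borel_prob_coupling: "regular_borel_prob coupling"
proof (rule regular_borel_prob_dominated[OF regular_pair.regular_borel_prob_reg_prod[OF regular_pair_fst_snd]
      prob_space_coupling])
  show "sets coupling = sets borel" unfolding coupling_def by (simp add: sets_Q)
  show "0 \<le> (\<Sum>E\<in>pos_part L P. 1 / measure L E)" by (intro sum_nonneg) auto
  fix D :: "('a \<times> 'b) set" assume D: "D \<in> sets borel"
  have "measure coupling D = (\<Sum>E\<in>pos_part L P. measure Q (D \<inter> cell E) / measure L E)"
    using measure_coupling[OF D] by (simp add: mu_yE_def cell_def)
  also have "\<dots> \<le> (\<Sum>E\<in>pos_part L P. measure Q D / measure L E)"
    using D sets_Q by (intro sum_mono divide_right_mono PQ.finite_measure_mono) (auto simp: pos_part_def)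
  finally show "measure coupling D \<le> (\<Sum>E\<in>pos_part L P. 1 / measure L E) * measure Q D"
    by (simp add: sum_distrib_right)
qed

lemma image_measure_eq_coupling: "image_measure_eq (\<lambda>(u, v). (f1 u, f2 v)) coupling (nu_yE L y P)"
  unfolding image_measure_eq_def
proof
  fix D :: "('g \<times> 'g) set" assume D: "D \<in> sets borel"
  let ?f = "\<lambda>(u, v). (f1 u, f2 v)"
  have fD: "?f -` D \<in> sets borel"
    using continuous_vimage_borel[OF _ D, of ?f] continuous_fst continuous_snd
    by (simp add: case_prod_beta' continuous_on_Pair continuous_on_compose2[of UNIV _ UNIV] continuous_intros)
  have "measure coupling (?f -` D) = (\<Sum>E\<in>pos_part L P. measure Q (?f -` D \<inter> cell E) / measure L E)"
    using measure_coupling[OF fD] by (simp add: mu_yE_def cell_def)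
  also have "\<dots> = (\<Sum>E\<in>pos_part L P. measure (reg_prod L L) (D \<inter> (E \<times> (\<lambda>e. e + y) ` E)) / measure L E)"
  proof (intro sum.cong refl)
    fix E assume "E \<in> pos_part L P"
    then have Eb: "E \<in> sets borel" using sets_P by (auto simp: pos_part_def)
    have eq: "?f -` D \<inter> cell E = ?f -` (D \<inter> (E \<times> (\<lambda>e. e + y) ` E))" unfolding cell_def by auto
    have "D \<inter> (E \<times> (\<lambda>e. e + y) ` E) \<in> sets borel"
      using D Eb by (intro sets.Int borel_Times sets_borel_translate)
    then have "measure Q (?f -` D \<inter> cell E) = measure (reg_prod L L) (D \<inter> (E \<times> (\<lambda>e. e + y) ` E))"
      unfolding eq by (rule measure_reg_prod_vimage_map[OF regular_pair_fst_snd regular_pair_group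
            continuous_fst image_fst continuous_snd image_snd])
    then show "measure Q (?f -` D \<inter> cell E) / measure L E = measure (reg_prod L L) (D \<inter> (E \<times> (\<lambda>e. e + y) ` E)) / measure L E"
      by simp
  qed
  also have "\<dots> = nu_yE L y P D" unfolding nu_yE_def ..
  finally show "measure coupling (?f -` D) = nu_yE L y P D" .
qed

end

theorem lemma3p4:
  fixes L :: "'g::{topological_group_add, t2_space} measure"
    and M1 :: "'a::t2_space measure" and M2 :: "'b::t2_space measure"
    and f1 :: "'a \<Rightarrow> 'g" and f2 :: "'b \<Rightarrow> 'g"
    and P :: "'g set set" and y :: 'g
  assumes "compact (UNIV :: 'a set)" and "compact (UNIV :: 'b set)"
    and "compact (UNIV :: 'g set)"
    and "haar_prob L"
    and "continuous_on UNIV f1" and "surj f1"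
    and "continuous_on UNIV f2" and "surj f2"
    and "regular_borel_prob M1" and "regular_borel_prob M2"
    and "image_measure_eq f1 M1 (measure L)"
    and "image_measure_eq f2 M2 (measure L)"
    and "finite_borel_partition P"
  shows "\<exists>R. regular_borel_prob R
           \<and> (\<forall>D\<in>sets borel. measure R D = mu_yE L M1 M2 f1 f2 y P D)
           \<and> image_measure_eq (\<lambda>(u, v). (f1 u, f2 v)) R (nu_yE L y P)
           \<and> (\<forall>A\<in>sets (borel :: 'a measure). mu_yE L M1 M2 f1 f2 y P (A \<times> UNIV) = measure M1 A)
           \<and> (\<forall>B\<in>sets (borel :: 'b measure). mu_yE L M1 M2 f1 f2 y P (UNIV \<times> B) = measure M2 B)"
proof -
  interpret coupling_data L M1 M2 f1 f2 P y
    using assms by unfold_locales auto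
  show ?thesis
    using regular_borel_prob_coupling measure_coupling image_measure_eq_coupling
      mu_yE_Times_UNIV mu_yE_UNIV_Times by blast
qed

end
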